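(* Let $\mathbb{A}$ be a 2-category and $p$ a 1-cell of $\mathbb{A}$. Then $p$ is an effective faithful morphism of $\mathbb{A}$ if and only if the 1-cell corresponding to $p$ in $\mathbb{A}^{\mathrm{co}}$ is an effective faithful morphism of $\mathbb{A}^{\mathrm{co}}$.
   Context: A 2-category is a $\mathbf{Cat}$-enriched category; composition of 1-cells is juxtaposition, vertical composition of 2-cells is $\cdot$, horizontal composition is $\ast$, $\mathrm{id}_f$ is the identity 2-cell on $f$. $\mathbb{A}^{\mathrm{co}}$ is the 2-category obtained from $\mathbb{A}$ by reversing the direction of the 2-cells. A 1-cell $f$ is an equivalence if there is $g$ with invertible 2-cells $gf\cong\mathrm{id}$, $\mathrm{id}\cong fg$. For $p:e\to b$: an opcomma object of $p$ along itself is $b\uparrow_p b$ with $\delta^0,\delta^1:b\to b\uparrow_pb$ and $\alpha:\delta^1p\Rightarrow\delta^0p$ such that for every $y$, $h\mapsto(h\delta^0,h\delta^1,\mathrm{id}_h\ast\alpha)$, $\xi\mapsto(\xi\ast\mathrm{id}_{\delta^0},\xi\ast\mathrm{id}_{\delta^1})$ is an isomorphism from $\mathbb{A}(b\uparrow_pb,y)$ onto the category of triples $(h_0,h_1:b\to y,\beta:h_1p\Rightarrow h_0p)$ with morphisms pairs $(\xi_0,\xi_1)$ with $(\xi_0\ast\mathrm{id}_p)\cdot\beta=\beta'\cdot(\xi_1\ast\mathrm{id}_p)$. A two-dimensional pushout of a span $f_0:c\to c_0$, $f_1:c\to c_1$ is $P$ with $q_0,q_1$, $q_0f_0=q_1f_1$,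 such that $k\mapsto(kq_0,kq_1)$ is an isomorphism from $\mathbb{A}(P,y)$ onto the category of pairs $(k_0,k_1)$ with $k_0f_0=k_1f_1$ and morphisms pairs of 2-cells $(\xi_0,\xi_1)$ with $\xi_0\ast\mathrm{id}_{f_0}=\xi_1\ast\mathrm{id}_{f_1}$. $\mathbb{A}$ has the two-dimensional cokernel diagram of $p$ if it has $b\uparrow_pb$ and a two-dimensional pushout $b\uparrow_pb\uparrow_pb$ of $(\delta^0,\delta^1)$ with $D^0,D^2$, $D^2\delta^0=D^0\delta^1$; $D^1$ is the unique 1-cell with $D^1\delta^1=D^2\delta^1$, $D^1\delta^0=D^0\delta^0$, $\mathrm{id}_{D^1}\ast\alpha=(\mathrm{id}_{D^0}\ast\alpha)\cdot(\mathrm{id}_{D^2}\ast\alpha)$; $s^0$ is the unique 1-cell with $s^0\delta^0=s^0\delta^1=\mathrm{id}_b$, $\mathrm{id}_{s^0}\ast\alpha=\mathrm{id}_p$. $\mathrm{Desc}_p(y)$ has objects $(h:y\to b,\beta:\delta^1h\Rightarrow\delta^0h)$ with $(\mathrm{id}_{D^0}\ast\beta)\cdot(\mathrm{id}_{D^2}\ast\beta)=\mathrm{id}_{D^1}\ast\beta$, $\mathrm{id}_{s^0}\ast\beta=\mathrm{id}_h$, morphisms 2-cells $\xi:h_1\Rightarrow h_0$ with $\beta_0\cdot(\mathrm{id}_{\delta^1}\ast\xi)=(\mathrm{id}_{\delta^0}\ast\xi)\cdot\beta_1$. A lax descent object of the two-dimensional cokernel diagram of $p$ is $L$ with $d:L\to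 b$, $\Psi:\delta^1d\Rightarrow\delta^0d$ such that $g\mapsto(dg,\Psi\ast\mathrm{id}_g)$, $\xi\mapsto\mathrm{id}_d\ast\xi$ is an isomorphism $\mathbb{A}(y,L)\cong\mathrm{Desc}_p(y)$ for all $y$; $p^H:e\to L$ is the unique 1-cell with $dp^H=p$ and $\Psi\ast\mathrm{id}_{p^H}=\alpha$. $p$ is an effective faithful morphism of $\mathbb{A}$ if $\mathbb{A}$ has the two-dimensional cokernel diagram of $p$, has a lax descent object $L$ of it, and $p^H:e\to L$ is an equivalence. *)

theory Defs
  imports Main
begin

text \<open>Objects of type 'o, 1-cells of type 'a, 2-cells of type 'c.
  comp1 A g f is the composite g f (first f, then g);
  vcomp A b a is the vertical composite b . a (first a, then b);
  hcomp A b a is the horizontal composite b * a, where a : f => f' with f : x -> y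
  and b : g => g' with g : y -> z, giving b * a : g f => g' f'.\<close>

record ('o, 'a, 'c) two_cat =
  obj   :: "'o set"
  arr1  :: "'a set"
  arr2  :: "'c set"
  src1  :: "'a \<Rightarrow> 'o"
  tgt1  :: "'a \<Rightarrow> 'o"
  idt1  :: "'o \<Rightarrow> 'a"
  comp1 :: "'a \<Rightarrow> 'a \<Rightarrow> 'a"
  dom2  :: "'c \<Rightarrow> 'a"
  cod2  :: "'c \<Rightarrow> 'a"
  idt2  :: "'a \<Rightarrow> 'c"
  vcomp :: "'c \<Rightarrow> 'c \<Rightarrow> 'c"
  hcomp :: "'c \<Rightarrow> 'c \<Rightarrow> 'c"

definition hom1 :: "('o, 'a, 'c, 'z) two_cat_scheme \<Rightarrow> 'o \<Rightarrow> 'o \<Rightarrow> 'a set" where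
  "hom1 A x y = {f \<in> arr1 A. src1 A f = x \<and> tgt1 A f = y}"

definition cell :: "('o, 'a, 'c, 'z) two_cat_scheme \<Rightarrow> 'a \<Rightarrow> 'a \<Rightarrow> 'c set" where
  "cell A f g = {\<alpha> \<in> arr2 A. dom2 A \<alpha> = f \<and> cod2 A \<alpha> = g}"

definition two_category :: "('o, 'a, 'c, 'z) two_cat_scheme \<Rightarrow> bool" where
  "two_category A \<longleftrightarrow>
     (\<forall>f\<in>arr1 A. src1 A f \<in> obj A \<and> tgt1 A f \<in> obj A) \<and>
     (\<forall>x\<in>obj A. idt1 A x \<in> hom1 A x x) \<and>
     (\<forall>f\<in>arr1 A. \<forall>g\<in>arr1 A. tgt1 A f = src1 A g \<longrightarrow>
        comp1 A g f \<in> hom1 A (src1 A f) (tgt1 A g)) \<and>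
     (\<forall>f\<in>arr1 A. \<forall>g\<in>arr1 A. \<forall>h\<in>arr1 A. tgt1 A f = src1 A g \<longrightarrow> tgt1 A g = src1 A h \<longrightarrow>
        comp1 A h (comp1 A g f) = comp1 A (comp1 A h g) f) \<and>
     (\<forall>f\<in>arr1 A. comp1 A (idt1 A (tgt1 A f)) f = f \<and> comp1 A f (idt1 A (src1 A f)) = f) \<and>
     (\<forall>\<alpha>\<in>arr2 A. dom2 A \<alpha> \<in> arr1 A \<and> cod2 A \<alpha> \<in> arr1 A \<and>
        src1 A (dom2 A \<alpha>) = src1 A (cod2 A \<alpha>) \<and> tgt1 A (dom2 A \<alpha>) = tgt1 A (cod2 A \<alpha>)) \<and>
     (\<forall>f\<in>arr1 A. idt2 A f \<in> cell A f f) \<and>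
     (\<forall>\<alpha>\<in>arr2 A. \<forall>\<beta>\<in>arr2 A. cod2 A \<alpha> = dom2 A \<beta> \<longrightarrow>
        vcomp A \<beta> \<alpha> \<in> cell A (dom2 A \<alpha>) (cod2 A \<beta>)) \<and>
     (\<forall>\<alpha>\<in>arr2 A. \<forall>\<beta>\<in>arr2 A. \<forall>\<gamma>\<in>arr2 A. cod2 A \<alpha> = dom2 A \<beta> \<longrightarrow> cod2 A \<beta> = dom2 A \<gamma> \<longrightarrow>
        vcomp A \<gamma> (vcomp A \<beta> \<alpha>) = vcomp A (vcomp A \<gamma> \<beta>) \<alpha>) \<and>
     (\<forall>\<alpha>\<in>arr2 A. vcomp A (idt2 A (cod2 A \<alpha>)) \<alpha> = \<alpha> \<and> vcomp A \<alpha> (idt2 A (dom2 A \<alpha>)) = \<alpha>) \<and>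
     (\<forall>\<alpha>\<in>arr2 A. \<forall>\<beta>\<in>arr2 A. tgt1 A (dom2 A \<alpha>) = src1 A (dom2 A \<beta>) \<longrightarrow>
        hcomp A \<beta> \<alpha> \<in> cell A (comp1 A (dom2 A \<beta>) (dom2 A \<alpha>)) (comp1 A (cod2 A \<beta>) (cod2 A \<alpha>))) \<and>
     (\<forall>\<alpha>\<in>arr2 A. \<forall>\<beta>\<in>arr2 A. \<forall>\<gamma>\<in>arr2 A.
        tgt1 A (dom2 A \<alpha>) = src1 A (dom2 A \<beta>) \<longrightarrow> tgt1 A (dom2 A \<beta>) = src1 A (dom2 A \<gamma>) \<longrightarrow>
        hcomp A \<gamma> (hcomp A \<beta> \<alpha>) = hcomp A (hcomp A \<gamma> \<beta>) \<alpha>) \<and>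
     (\<forall>\<alpha>\<in>arr2 A. hcomp A (idt2 A (idt1 A (tgt1 A (dom2 A \<alpha>)))) \<alpha> = \<alpha> \<and>
        hcomp A \<alpha> (idt2 A (idt1 A (src1 A (dom2 A \<alpha>)))) = \<alpha>) \<and>
     (\<forall>f\<in>arr1 A. \<forall>g\<in>arr1 A. tgt1 A f = src1 A g \<longrightarrow>
        hcomp A (idt2 A g) (idt2 A f) = idt2 A (comp1 A g f)) \<and>
     (\<forall>\<alpha>\<in>arr2 A. \<forall>\<alpha>'\<in>arr2 A. \<forall>\<beta>\<in>arr2 A. \<forall>\<beta>'\<in>arr2 A.
        cod2 A \<alpha> = dom2 A \<alpha>' \<longrightarrow> cod2 A \<beta> = dom2 A \<beta>' \<longrightarrow> tgt1 A (dom2 A \<alpha>) = src1 A (dom2 A \<beta>) \<longrightarrow>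
        hcomp A (vcomp A \<beta>' \<beta>) (vcomp A \<alpha>' \<alpha>) = vcomp A (hcomp A \<beta>' \<alpha>') (hcomp A \<beta> \<alpha>))"

definition co :: "('o, 'a, 'c, 'z) two_cat_scheme \<Rightarrow> ('o, 'a, 'c, 'z) two_cat_scheme" where
  "co A = A\<lparr>dom2 := cod2 A, cod2 := dom2 A, vcomp := (\<lambda>\<beta> \<alpha>. vcomp A \<alpha> \<beta>)\<rparr>"

definition invertible2 :: "('o, 'a, 'c, 'z) two_cat_scheme \<Rightarrow> 'c \<Rightarrow> bool" where
  "invertible2 A \<theta> \<longleftrightarrow> \<theta> \<in> arr2 A \<and>
     (\<exists>\<theta>'\<in>cell A (cod2 A \<theta>) (dom2 A \<theta>).
        vcomp A \<theta>' \<theta> = idt2 A (dom2 A \<theta>) \<and> vcomp A \<theta> \<theta>' = idt2 A (cod2 A \<theta>))"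

definition equivalence1 :: "('o, 'a, 'c, 'z) two_cat_scheme \<Rightarrow> 'a \<Rightarrow> bool" where
  "equivalence1 A f \<longleftrightarrow> f \<in> arr1 A \<and>
     (\<exists>g\<in>hom1 A (tgt1 A f) (src1 A f).
        (\<exists>\<theta>\<in>cell A (comp1 A g f) (idt1 A (src1 A f)). invertible2 A \<theta>) \<and>
        (\<exists>\<eta>\<in>cell A (idt1 A (tgt1 A f)) (comp1 A f g). invertible2 A \<eta>))"

text \<open>Opcomma object Q of p along itself, with d0 = delta^0, d1 = delta^1,
  alpha : d1 p => d0 p.  The isomorphism of categories is written out as
  bijectivity on objects and on each hom-set.\<close>

definition opcomma ::
  "('o, 'a, 'c, 'z) two_cat_scheme \<Rightarrow> 'a \<Rightarrow> 'o \<Rightarrow> 'a \<Rightarrow> 'a \<Rightarrow> 'c \<Rightarrow> bool" where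
  "opcomma A p Q d0 d1 \<alpha> \<longleftrightarrow>
     (let b = tgt1 A p in
      p \<in> arr1 A \<and> Q \<in> obj A \<and> d0 \<in> hom1 A b Q \<and> d1 \<in> hom1 A b Q \<and>
      \<alpha> \<in> cell A (comp1 A d1 p) (comp1 A d0 p) \<and>
      (\<forall>y\<in>obj A.
        (\<forall>h0\<in>hom1 A b y. \<forall>h1\<in>hom1 A b y. \<forall>\<beta>\<in>cell A (comp1 A h1 p) (comp1 A h0 p).
           \<exists>!h. h \<in> hom1 A Q y \<and> comp1 A h d0 = h0 \<and> comp1 A h d1 = h1 \<and>
                hcomp A (idt2 A h) \<alpha> = \<beta>) \<and>
        (\<forall>h\<in>hom1 A Q y. \<forall>h'\<in>hom1 A Q y.
           \<forall>\<xi>0\<in>cell A (comp1 A h d0) (comp1 A h' d0). \<forall>\<xi>1\<in>cell A (comp1 A h d1) (comp1 A h' d1).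
           vcomp A (hcomp A \<xi>0 (idt2 A p)) (hcomp A (idt2 A h) \<alpha>)
             = vcomp A (hcomp A (idt2 A h') \<alpha>) (hcomp A \<xi>1 (idt2 A p)) \<longrightarrow>
           (\<exists>!\<xi>. \<xi> \<in> cell A h h' \<and> hcomp A \<xi> (idt2 A d0) = \<xi>0 \<and> hcomp A \<xi> (idt2 A d1) = \<xi>1))))"

definition pushout2 ::
  "('o, 'a, 'c, 'z) two_cat_scheme \<Rightarrow> 'a \<Rightarrow> 'a \<Rightarrow> 'o \<Rightarrow> 'a \<Rightarrow> 'a \<Rightarrow> bool" where
  "pushout2 A f0 f1 P q0 q1 \<longleftrightarrow>
     (let c0 = tgt1 A f0; c1 = tgt1 A f1 in
      f0 \<in> arr1 A \<and> f1 \<in> arr1 A \<and> src1 A f0 = src1 A f1 \<and>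
      P \<in> obj A \<and> q0 \<in> hom1 A c0 P \<and> q1 \<in> hom1 A c1 P \<and> comp1 A q0 f0 = comp1 A q1 f1 \<and>
      (\<forall>y\<in>obj A.
        (\<forall>k0\<in>hom1 A c0 y. \<forall>k1\<in>hom1 A c1 y. comp1 A k0 f0 = comp1 A k1 f1 \<longrightarrow>
           (\<exists>!k. k \<in> hom1 A P y \<and> comp1 A k q0 = k0 \<and> comp1 A k q1 = k1)) \<and>
        (\<forall>k\<in>hom1 A P y. \<forall>k'\<in>hom1 A P y.
           \<forall>\<xi>0\<in>cell A (comp1 A k q0) (comp1 A k' q0). \<forall>\<xi>1\<in>cell A (comp1 A k q1) (comp1 A k' q1).
           hcomp A \<xi>0 (idt2 A f0) = hcomp A \<xi>1 (idt2 A f1) \<longrightarrow>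
           (\<exists>!\<xi>. \<xi> \<in> cell A k k' \<and> hcomp A \<xi> (idt2 A q0) = \<xi>0 \<and> hcomp A \<xi> (idt2 A q1) = \<xi>1))))"

text \<open>Q = b up_p b (with d0, d1, alpha), Q3 = b up_p b up_p b (pushout of (d0, d1) with
  D0, D2 and D2 d0 = D0 d1), D1 and s0 as in the paper (characterised by their equations;
  they are unique by the universal property of the opcomma object).\<close>

definition cokernel_diagram ::
  "('o, 'a, 'c, 'z) two_cat_scheme \<Rightarrow> 'a \<Rightarrow> 'o \<Rightarrow> 'a \<Rightarrow> 'a \<Rightarrow> 'c \<Rightarrow>
   'o \<Rightarrow> 'a \<Rightarrow> 'a \<Rightarrow> 'a \<Rightarrow> 'a \<Rightarrow> bool" where
  "cokernel_diagram A p Q d0 d1 \<alpha> Q3 D0 D1 D2 s0 \<longleftrightarrow>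
     opcomma A p Q d0 d1 \<alpha> \<and> pushout2 A d0 d1 Q3 D2 D0 \<and>
     D1 \<in> hom1 A Q Q3 \<and> comp1 A D1 d1 = comp1 A D2 d1 \<and> comp1 A D1 d0 = comp1 A D0 d0 \<and>
     hcomp A (idt2 A D1) \<alpha> = vcomp A (hcomp A (idt2 A D0) \<alpha>) (hcomp A (idt2 A D2) \<alpha>) \<and>
     s0 \<in> hom1 A Q (tgt1 A p) \<and> comp1 A s0 d0 = idt1 A (tgt1 A p) \<and>
     comp1 A s0 d1 = idt1 A (tgt1 A p) \<and> hcomp A (idt2 A s0) \<alpha> = idt2 A p"

definition desc_obj ::
  "('o, 'a, 'c, 'z) two_cat_scheme \<Rightarrow> 'o \<Rightarrow> 'a \<Rightarrow> 'a \<Rightarrow> 'a \<Rightarrow> 'a \<Rightarrow> 'a \<Rightarrow> 'a \<Rightarrow>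
   'o \<Rightarrow> 'a \<Rightarrow> 'c \<Rightarrow> bool" where
  "desc_obj A b d0 d1 D0 D1 D2 s0 y h \<beta> \<longleftrightarrow>
     h \<in> hom1 A y b \<and> \<beta> \<in> cell A (comp1 A d1 h) (comp1 A d0 h) \<and>
     vcomp A (hcomp A (idt2 A D0) \<beta>) (hcomp A (idt2 A D2) \<beta>) = hcomp A (idt2 A D1) \<beta> \<and>
     hcomp A (idt2 A s0) \<beta> = idt2 A h"

definition desc_mor ::
  "('o, 'a, 'c, 'z) two_cat_scheme \<Rightarrow> 'a \<Rightarrow> 'a \<Rightarrow> 'a \<Rightarrow> 'c \<Rightarrow> 'a \<Rightarrow> 'c \<Rightarrow> 'c \<Rightarrow> bool" where
  "desc_mor A d0 d1 h0 \<beta>0 h1 \<beta>1 \<xi> \<longleftrightarrow>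
     \<xi> \<in> cell A h1 h0 \<and>
     vcomp A \<beta>0 (hcomp A (idt2 A d1) \<xi>) = vcomp A (hcomp A (idt2 A d0) \<xi>) \<beta>1"

text \<open>Lax descent object (L, d, Psi) of the cokernel diagram; the isomorphism
  A(y, L) = Desc_p(y) is written out as: well-defined, bijective on objects,
  bijective on hom-sets.\<close>

definition lax_descent ::
  "('o, 'a, 'c, 'z) two_cat_scheme \<Rightarrow> 'a \<Rightarrow> 'a \<Rightarrow> 'a \<Rightarrow> 'a \<Rightarrow> 'a \<Rightarrow> 'a \<Rightarrow> 'a \<Rightarrow>
   'o \<Rightarrow> 'a \<Rightarrow> 'c \<Rightarrow> bool" where
  "lax_descent A p d0 d1 D0 D1 D2 s0 L d \<Psi> \<longleftrightarrow>
     (let b = tgt1 A p in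
      L \<in> obj A \<and> d \<in> hom1 A L b \<and> \<Psi> \<in> cell A (comp1 A d1 d) (comp1 A d0 d) \<and>
      (\<forall>y\<in>obj A.
        (\<forall>g\<in>hom1 A y L. desc_obj A b d0 d1 D0 D1 D2 s0 y (comp1 A d g) (hcomp A \<Psi> (idt2 A g))) \<and>
        (\<forall>h \<beta>. desc_obj A b d0 d1 D0 D1 D2 s0 y h \<beta> \<longrightarrow>
           (\<exists>!g. g \<in> hom1 A y L \<and> comp1 A d g = h \<and> hcomp A \<Psi> (idt2 A g) = \<beta>)) \<and>
        (\<forall>g0\<in>hom1 A y L. \<forall>g1\<in>hom1 A y L. \<forall>\<xi>'.
           desc_mor A d0 d1 (comp1 A d g0) (hcomp A \<Psi> (idt2 A g0))
                            (comp1 A d g1) (hcomp A \<Psi> (idt2 A g1)) \<xi>' \<longrightarrow>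
           (\<exists>!\<xi>. \<xi> \<in> cell A g1 g0 \<and> hcomp A (idt2 A d) \<xi> = \<xi>'))))"

definition effective_faithful :: "('o, 'a, 'c, 'z) two_cat_scheme \<Rightarrow> 'a \<Rightarrow> bool" where
  "effective_faithful A p \<longleftrightarrow> p \<in> arr1 A \<and>
     (\<exists>Q d0 d1 \<alpha> Q3 D0 D1 D2 s0.
        cokernel_diagram A p Q d0 d1 \<alpha> Q3 D0 D1 D2 s0 \<and>
        (\<exists>L d \<Psi>. lax_descent A p d0 d1 D0 D1 D2 s0 L d \<Psi> \<and>
           (\<exists>pH. pH \<in> hom1 A (src1 A p) L \<and> comp1 A d pH = p \<and>
                 hcomp A \<Psi> (idt2 A pH) = \<alpha> \<and> equivalence1 A pH)))"

end

theory Submission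
  imports Defs
begin

text \<open>The opcomma object of
  \<open>p\<close> in \<open>\<A>\<close> is, with \<open>\<delta>\<^sup>0\<close> and \<open>\<delta>\<^sup>1\<close> interchanged, the opcomma object of \<open>p\<close> in \<open>\<A>\<^sup>c\<^sup>o\<close>;
  since two-dimensional pushouts are self-dual and symmetric in the two legs, the whole
  cokernel diagram transports with \<open>D\<^sup>0\<close> and \<open>D\<^sup>2\<close> interchanged, descent data correspond
  to descent data, and the same \<open>(L, d, \<Psi>)\<close> is a lax descent object. Finally equivalences
  are self-dual because the witnessing 2-cells are invertible. As \<open>(\<A>\<^sup>c\<^sup>o)\<^sup>c\<^sup>o = \<A>\<close>, one
  direction suffices; no 2-category axiom is needed.\<close>

lemma co_simps [simp]:
  "obj (co A) = obj A" "arr1 (co A) = arr1 A" "arr2 (co A) = arr2 A"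
  "src1 (co A) = src1 A" "tgt1 (co A) = tgt1 A" "idt1 (co A) = idt1 A"
  "comp1 (co A) = comp1 A" "dom2 (co A) = cod2 A" "cod2 (co A) = dom2 A"
  "idt2 (co A) = idt2 A" "vcomp (co A) \<beta> \<alpha> = vcomp A \<alpha> \<beta>" "hcomp (co A) = hcomp A"
  by (simp_all add: co_def)

lemma co_co [simp]: "co (co A) = A"
  by (simp add: co_def)

lemma hom1_co [simp]: "hom1 (co A) = hom1 A"
  by (simp add: hom1_def fun_eq_iff)

lemma cell_co [simp]: "cell (co A) f g = cell A g f"
  by (auto simp add: cell_def)

lemma opcomma_coI:
  assumes "opcomma A p Q d0 d1 \<alpha>"
  shows "opcomma (co A) p Q d1 d0 \<alpha>"
proof -
  note opc = assms[unfolded opcomma_def Let_def]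
  show ?thesis
    unfolding opcomma_def Let_def
  proof (intro conjI ballI impI)
    fix y h0 h1 \<beta>
    assume "y \<in> obj (co A)" "h0 \<in> hom1 (co A) (tgt1 (co A) p) y" "h1 \<in> hom1 (co A) (tgt1 (co A) p) y"
      "\<beta> \<in> cell (co A) (comp1 (co A) h1 p) (comp1 (co A) h0 p)"
    then have "\<exists>!h. h \<in> hom1 A Q y \<and> comp1 A h d0 = h1 \<and> comp1 A h d1 = h0 \<and> hcomp A (idt2 A h) \<alpha> = \<beta>"
      using opc by simp
    then show "\<exists>!h. h \<in> hom1 (co A) Q y \<and> comp1 (co A) h d1 = h0 \<and> comp1 (co A) h d0 = h1 \<and>
        hcomp (co A) (idt2 (co A) h) \<alpha> = \<beta>"
      by (simp add: conj_commute conj_left_commute)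
  next
    fix y h h' \<xi>0 \<xi>1
    assume "y \<in> obj (co A)" "h \<in> hom1 (co A) Q y" "h' \<in> hom1 (co A) Q y"
      "\<xi>0 \<in> cell (co A) (comp1 (co A) h d1) (comp1 (co A) h' d1)"
      "\<xi>1 \<in> cell (co A) (comp1 (co A) h d0) (comp1 (co A) h' d0)"
      "vcomp (co A) (hcomp (co A) \<xi>0 (idt2 (co A) p)) (hcomp (co A) (idt2 (co A) h) \<alpha>) =
       vcomp (co A) (hcomp (co A) (idt2 (co A) h') \<alpha>) (hcomp (co A) \<xi>1 (idt2 (co A) p))"
    then have "\<exists>!\<xi>. \<xi> \<in> cell A h' h \<and> hcomp A \<xi> (idt2 A d0) = \<xi>1 \<and> hcomp A \<xi> (idt2 A d1) = \<xi>0"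
      using opc by simp
    then show "\<exists>!\<xi>. \<xi> \<in> cell (co A) h h' \<and> hcomp (co A) \<xi> (idt2 (co A) d1) = \<xi>0 \<and>
        hcomp (co A) \<xi> (idt2 (co A) d0) = \<xi>1"
      by (simp add: conj_commute conj_left_commute)
  qed (use opc in simp_all)
qed

lemma opcomma_co: "opcomma (co A) p Q d1 d0 \<alpha> \<longleftrightarrow> opcomma A p Q d0 d1 \<alpha>"
  using opcomma_coI[of A] opcomma_coI[of "co A"] by auto

lemma pushout2_swapI:
  assumes "pushout2 A f0 f1 P q0 q1"
  shows "pushout2 A f1 f0 P q1 q0"
proof -
  note po = assms[unfolded pushout2_def Let_def]
  show ?thesis
    unfolding pushout2_def Let_def
  proof (intro conjI ballI impI)
    fix y k0 k1
    assume "y \<in> obj A" "k0 \<in> hom1 A (tgt1 A f1) y" "k1 \<in> hom1 A (tgt1 A f0) y"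
      "comp1 A k0 f1 = comp1 A k1 f0"
    then have "\<exists>!k. k \<in> hom1 A P y \<and> comp1 A k q0 = k1 \<and> comp1 A k q1 = k0"
      using po by simp
    then show "\<exists>!k. k \<in> hom1 A P y \<and> comp1 A k q1 = k0 \<and> comp1 A k q0 = k1"
      by (simp add: conj_commute conj_left_commute)
  next
    fix y k k' \<xi>0 \<xi>1
    assume "y \<in> obj A" "k \<in> hom1 A P y" "k' \<in> hom1 A P y"
      "\<xi>0 \<in> cell A (comp1 A k q1) (comp1 A k' q1)" "\<xi>1 \<in> cell A (comp1 A k q0) (comp1 A k' q0)"
      "hcomp A \<xi>0 (idt2 A f1) = hcomp A \<xi>1 (idt2 A f0)"
    then have "\<exists>!\<xi>. \<xi> \<in> cell A k k' \<and> hcomp A \<xi> (idt2 A q0) = \<xi>1 \<and> hcomp A \<xi> (idt2 A q1) = \<xi>0"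
      using po by simp
    then show "\<exists>!\<xi>. \<xi> \<in> cell A k k' \<and> hcomp A \<xi> (idt2 A q1) = \<xi>0 \<and> hcomp A \<xi> (idt2 A q0) = \<xi>1"
      by (simp add: conj_commute conj_left_commute)
  qed (use po in simp_all)
qed

lemma pushout2_swap: "pushout2 A f1 f0 P q1 q0 \<longleftrightarrow> pushout2 A f0 f1 P q0 q1"
  using pushout2_swapI[of A f1 f0 P q1 q0] pushout2_swapI[of A f0 f1 P q0 q1] by blast

lemma pushout2_coI: "pushout2 A f0 f1 P q0 q1 \<Longrightarrow> pushout2 (co A) f0 f1 P q0 q1"
  unfolding pushout2_def Let_def by simp

lemma pushout2_co: "pushout2 (co A) f0 f1 P q0 q1 \<longleftrightarrow> pushout2 A f0 f1 P q0 q1"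
  using pushout2_coI[of A] pushout2_coI[of "co A"] by auto

lemma cokernel_diagram_co:
  "cokernel_diagram (co A) p Q d1 d0 \<alpha> Q3 D2 D1 D0 s0 \<longleftrightarrow>
   cokernel_diagram A p Q d0 d1 \<alpha> Q3 D0 D1 D2 s0"
  unfolding cokernel_diagram_def opcomma_co pushout2_co
  using pushout2_swap[of A d0 d1 Q3 D2 D0] by auto

lemma desc_obj_co:
  "desc_obj (co A) b d1 d0 D2 D1 D0 s0 y h \<beta> \<longleftrightarrow> desc_obj A b d0 d1 D0 D1 D2 s0 y h \<beta>"
  unfolding desc_obj_def by auto

lemma desc_mor_co:
  "desc_mor (co A) d1 d0 h0 \<beta>0 h1 \<beta>1 \<xi> \<longleftrightarrow> desc_mor A d0 d1 h1 \<beta>1 h0 \<beta>0 \<xi>"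
  unfolding desc_mor_def by auto

lemma lax_descent_coI:
  "lax_descent A p d0 d1 D0 D1 D2 s0 L d \<Psi> \<Longrightarrow> lax_descent (co A) p d1 d0 D2 D1 D0 s0 L d \<Psi>"
  unfolding lax_descent_def Let_def desc_obj_co desc_mor_co by simp

lemma lax_descent_co:
  "lax_descent (co A) p d1 d0 D2 D1 D0 s0 L d \<Psi> \<longleftrightarrow> lax_descent A p d0 d1 D0 D1 D2 s0 L d \<Psi>"
  using lax_descent_coI[of A] lax_descent_coI[of "co A"] by auto

lemma invertible2_co: "invertible2 (co A) \<theta> \<longleftrightarrow> invertible2 A \<theta>"
  unfolding invertible2_def by auto

lemma invertible2_inverse:
  assumes "invertible2 A \<theta>"
  obtains \<theta>' where "\<theta>' \<in> cell A (cod2 A \<theta>) (dom2 A \<theta>)" "invertible2 A \<theta>'"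
  using assms unfolding invertible2_def cell_def by auto

lemma equivalence1_coI:
  assumes "equivalence1 A f"
  shows "equivalence1 (co A) f"
proof -
  obtain g \<theta> \<eta> where f: "f \<in> arr1 A" and g: "g \<in> hom1 A (tgt1 A f) (src1 A f)"
    and \<theta>: "\<theta> \<in> cell A (comp1 A g f) (idt1 A (src1 A f))" "invertible2 A \<theta>"
    and \<eta>: "\<eta> \<in> cell A (idt1 A (tgt1 A f)) (comp1 A f g)" "invertible2 A \<eta>"
    using assms unfolding equivalence1_def by blast
  obtain \<theta>' where "\<theta>' \<in> cell A (idt1 A (src1 A f)) (comp1 A g f)" "invertible2 A \<theta>'"
    using invertible2_inverse[OF \<theta>(2)] \<theta>(1) unfolding cell_def by auto
  moreover obtain \<eta>' where "\<eta>' \<in> cell A (comp1 A f g) (idt1 A (tgt1 A f))" "invertible2 A \<eta>'"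
    using invertible2_inverse[OF \<eta>(2)] \<eta>(1) unfolding cell_def by auto
  ultimately show ?thesis
    using f g unfolding equivalence1_def co_simps hom1_co cell_co invertible2_co by blast
qed

lemma effective_faithful_coI:
  assumes "effective_faithful A p"
  shows "effective_faithful (co A) p"
proof -
  obtain Q d0 d1 \<alpha> Q3 D0 D1 D2 s0 L d \<Psi> pH where
    "p \<in> arr1 A" and "cokernel_diagram A p Q d0 d1 \<alpha> Q3 D0 D1 D2 s0"
    and "lax_descent A p d0 d1 D0 D1 D2 s0 L d \<Psi>"
    and "pH \<in> hom1 A (src1 A p) L" "comp1 A d pH = p" "hcomp A \<Psi> (idt2 A pH) = \<alpha>"
    and "equivalence1 A pH"
    using assms unfolding effective_faithful_def by blast
  then have "cokernel_diagram (co A) p Q d1 d0 \<alpha> Q3 D2 D1 D0 s0"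
    and "lax_descent (co A) p d1 d0 D2 D1 D0 s0 L d \<Psi>"
    and "equivalence1 (co A) pH"
    by (simp_all add: cokernel_diagram_co lax_descent_co equivalence1_coI)
  with \<open>p \<in> arr1 A\<close> \<open>pH \<in> hom1 A (src1 A p) L\<close> \<open>comp1 A d pH = p\<close> \<open>hcomp A \<Psi> (idt2 A pH) = \<alpha>\<close>
  show ?thesis
    unfolding effective_faithful_def co_simps hom1_co by blast
qed

theorem lemma5p6:
  fixes A :: "('o, 'a, 'c) two_cat" and p :: 'a
  assumes "two_category A" and "p \<in> arr1 A"
  shows "effective_faithful A p \<longleftrightarrow> effective_faithful (co A) p"
  using effective_faithful_coI[of A p] effective_faithful_coI[of "co A" p] by auto

end
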